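(* Let $r\ge 2$ be an even integer. For every nonnegative integer $n$, the number of overpartitions of $n$ in which every non-overlined part is odd and greater than $r$ (overlined parts being unrestricted apart from being distinct) equals the number of partitions of $n$ into odd parts in which parts greater than $r$ may come in two colors (parts at most $r$ have a single color).
   Context: A partition of $n$ is a finite non-increasing sequence of positive integers (parts) summing to $n$ (the empty partition is the unique partition of $0$). In partitions with two colors, two partitions are the same if they have the same multiset of (part, color) pairs; e.g. for $r=2$, $n=6$ the relevant partitions are $5_11,5_21,3_13_1,3_13_2,3_23_2,3_11^3,3_21^3,1^6$. An overpartition of $n$ is a partition of $n$ in which the first occurrence of each part size may be overlined; equivalently, a pair $(\lambda,\mu)$ with $\lambda$ a partition into distinct parts (the overlined parts), $\mu$ an arbitrary partition (the non-overlined parts), and $|\lambda|+|\mu|=n$. *)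

theory Defs
  imports Main "HOL-Library.Multiset"
begin

definition partitions :: "nat \<Rightarrow> nat multiset set" where
  "partitions n = {M. (\<forall>x\<in>#M. 0 < x) \<and> sum_mset M = n}"

definition coloured_partitions :: "nat \<Rightarrow> (nat \<times> nat) multiset set" where
  "coloured_partitions n = {P. (\<forall>p\<in>#P. 0 < fst p) \<and> sum_mset (image_mset fst P) = n}"

text \<open>An overpartition of n as a pair (L, M): L the finite set of (distinct)
  overlined parts, M the partition formed by the non-overlined parts.\<close>
definition overpartitions :: "nat \<Rightarrow> (nat set \<times> nat multiset) set" where
  "overpartitions n = {(L, M). finite L \<and> (\<forall>x\<in>L. 0 < x) \<and> (\<forall>x\<in>#M. 0 < x)
                          \<and> \<Sum>L + sum_mset M = n}"

end

(* Glaisher's bijection between partitions into distinct parts and partitions into odd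
   parts carries the overlined parts to the parts of colour 1: a part 2^a m with m odd is
   replaced by 2^a copies of m, so that the multiplicity of m, read in binary, records
   which of the parts 2^a m (a = 0, 1, ...) were overlined. The non-overlined parts are
   kept unchanged as the parts of colour 2. *)
theory Submission
  imports Defs "HOL-Library.Nat_Bijection" "HOL-Computational_Algebra.Primes"
begin

definition odd_part :: "nat \<Rightarrow> nat" where
  "odd_part x = x div 2 ^ multiplicity 2 x"

lemma two_power_multiplicity_times_odd_part: "2 ^ multiplicity 2 x * odd_part x = x"
  unfolding odd_part_def by (simp add: multiplicity_dvd)

lemma odd_odd_part: "x \<noteq> 0 \<Longrightarrow> odd (odd_part x)"
  unfolding odd_part_def by (simp add: multiplicity_decompose)

lemma multiplicity_two_power_times_odd:
  fixes a m :: nat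
  assumes "odd m"
  shows "multiplicity 2 (2 ^ a * m) = a"
proof (rule multiplicity_eqI)
  show "\<not> 2 ^ Suc a dvd 2 ^ a * m"
    using assms by simp
qed simp

lemma odd_part_two_power_times_odd: "odd (m :: nat) \<Longrightarrow> odd_part (2 ^ a * m) = m"
  unfolding odd_part_def by (simp add: multiplicity_two_power_times_odd)

lemma multiplicity_two_odd_part_inject:
  "multiplicity 2 x = multiplicity 2 y \<Longrightarrow> odd_part x = odd_part y \<Longrightarrow> x = y"
  by (metis two_power_multiplicity_times_odd_part)

definition glaisher :: "nat set \<Rightarrow> nat multiset" where
  "glaisher L = (\<Sum>x\<in>L. replicate_mset (2 ^ multiplicity 2 x) (odd_part x))"

definition glaisher_inv :: "nat multiset \<Rightarrow> nat set" where
  "glaisher_inv A = (\<lambda>(m, a). 2 ^ a * m) ` (SIGMA m:set_mset A. set_decode (count A m))"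

lemma sum_mset_glaisher: "finite L \<Longrightarrow> sum_mset (glaisher L) = \<Sum>L"
  unfolding glaisher_def
  by (induction L rule: finite_induct) (simp_all add: two_power_multiplicity_times_odd_part)

lemma odd_glaisher:
  assumes "finite L" "0 \<notin> L" "m \<in># glaisher L"
  shows "odd m"
  using assms unfolding glaisher_def
  by (induction L rule: finite_induct) (auto split: if_splits simp: odd_odd_part)

lemma count_glaisher:
  assumes "finite L"
  shows "count (glaisher L) m = set_encode (multiplicity 2 ` {x\<in>L. odd_part x = m})"
proof -
  have inj: "inj_on (multiplicity 2) {x\<in>L. odd_part x = m}"
    by (rule inj_onI) (auto intro: multiplicity_two_odd_part_inject)
  have "count (glaisher L) m = (\<Sum>x\<in>L. if odd_part x = m then 2 ^ multiplicity 2 x else 0)"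
    unfolding glaisher_def by (auto simp: count_sum intro!: sum.cong)
  also have "\<dots> = (\<Sum>x\<in>{x\<in>L. odd_part x = m}. 2 ^ multiplicity 2 x)"
    using assms by (simp add: sum.inter_filter)
  also have "\<dots> = set_encode (multiplicity 2 ` {x\<in>L. odd_part x = m})"
    unfolding set_encode_def using inj by (simp add: sum.reindex)
  finally show ?thesis .
qed

lemma finite_glaisher_inv: "finite (glaisher_inv A)"
  unfolding glaisher_inv_def by simp

lemma glaisher_inv_glaisher:
  assumes "finite L"
  shows "glaisher_inv (glaisher L) = L"
proof (intro set_eqI iffI)
  fix x assume "x \<in> glaisher_inv (glaisher L)"
  then obtain m a where x: "x = 2 ^ a * m" "m \<in># glaisher L"
    and "a \<in> multiplicity 2 ` {y\<in>L. odd_part y = m}"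
    unfolding glaisher_inv_def count_glaisher[OF assms] using assms by auto
  then obtain y where "y \<in> L" "odd_part y = m" "multiplicity 2 y = a"
    by blast
  then show "x \<in> L"
    using x(1) two_power_multiplicity_times_odd_part[of y] by simp
next
  fix x assume "x \<in> L"
  let ?m = "odd_part x" and ?a = "multiplicity 2 x"
  have "?a \<in> set_decode (count (glaisher L) ?m)"
    unfolding count_glaisher[OF assms] using assms \<open>x \<in> L\<close> by simp
  then have "?m \<in># glaisher L"
    by (metis count_inI empty_iff set_decode_zero)
  with \<open>?a \<in> set_decode _\<close> show "x \<in> glaisher_inv (glaisher L)"
    unfolding glaisher_inv_def using two_power_multiplicity_times_odd_part[of x]
    by (auto intro!: image_eqI[where x = "(?m, ?a)"])
qed

lemma glaisher_glaisher_inv: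
  assumes "\<forall>m\<in>#A. odd m"
  shows "glaisher (glaisher_inv A) = A"
proof (rule multiset_eqI)
  fix m
  have "multiplicity 2 ` {x\<in>glaisher_inv A. odd_part x = m} = set_decode (count A m)"
  proof (intro set_eqI iffI)
    fix a assume "a \<in> multiplicity 2 ` {x\<in>glaisher_inv A. odd_part x = m}"
    then obtain m' a' where "m' \<in># A" "a' \<in> set_decode (count A m')"
      and "odd_part (2 ^ a' * m') = m" "a = multiplicity 2 (2 ^ a' * m')"
      unfolding glaisher_inv_def by auto
    then show "a \<in> set_decode (count A m)"
      using assms by (simp add: odd_part_two_power_times_odd multiplicity_two_power_times_odd)
  next
    fix a assume a: "a \<in> set_decode (count A m)"
    then have "m \<in># A"
      by (metis count_inI empty_iff set_decode_zero)
    with a have "2 ^ a * m \<in> {x\<in>glaisher_inv A. odd_part x = m}"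
      using assms unfolding glaisher_inv_def by (auto simp: odd_part_two_power_times_odd)
    moreover have "multiplicity 2 (2 ^ a * m) = a"
      using \<open>m \<in># A\<close> assms by (simp add: multiplicity_two_power_times_odd)
    ultimately show "a \<in> multiplicity 2 ` {x\<in>glaisher_inv A. odd_part x = m}"
      by (metis image_eqI)
  qed
  then show "count (glaisher (glaisher_inv A)) m = count A m"
    by (simp add: count_glaisher finite_glaisher_inv)
qed

lemma bij_betw_glaisher:
  "bij_betw glaisher {L. finite L \<and> 0 \<notin> L} {A. \<forall>m\<in>#A. odd m}"
proof (rule bij_betw_byWitness[where f' = glaisher_inv])
  show "glaisher ` {L. finite L \<and> 0 \<notin> L} \<subseteq> {A. \<forall>m\<in>#A. odd m}"
    using odd_glaisher by blast
  show "glaisher_inv ` {A. \<forall>m\<in>#A. odd m} \<subseteq> {L. finite L \<and> 0 \<notin> L}"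
    unfolding glaisher_inv_def by (fastforce elim: oddE)
qed (simp_all add: glaisher_inv_glaisher glaisher_glaisher_inv)

definition two_coloured :: "'a multiset \<Rightarrow> 'a multiset \<Rightarrow> ('a \<times> nat) multiset" where
  "two_coloured A M = image_mset (\<lambda>x. (x, 1)) A + image_mset (\<lambda>x. (x, 2)) M"

definition colour_class :: "nat \<Rightarrow> ('a \<times> nat) multiset \<Rightarrow> 'a multiset" where
  "colour_class c C = image_mset fst (filter_mset (\<lambda>p. snd p = c) C)"

lemma colour_class_two_coloured:
  "colour_class 1 (two_coloured A M) = A"
  "colour_class 2 (two_coloured A M) = M"
  unfolding colour_class_def two_coloured_def
  by (simp_all add: filter_mset_image_mset multiset.map_comp comp_def)

lemma two_coloured_colour_class:
  assumes "\<forall>p\<in>#C. snd p = 1 \<or> snd p = 2"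
  shows "two_coloured (colour_class 1 C) (colour_class 2 C) = C"
proof -
  have recolour: "image_mset (\<lambda>x. (x, c)) (colour_class c C) = filter_mset (\<lambda>p. snd p = c) C"
    for c
    unfolding colour_class_def by (induction C) auto
  have "filter_mset (\<lambda>p. snd p = 2) C = filter_mset (\<lambda>p. snd p \<noteq> 1) C"
    using assms by (auto intro: filter_mset_cong)
  then show ?thesis
    unfolding two_coloured_def recolour by (simp add: multiset_partition[symmetric])
qed

lemma image_mset_fst_two_coloured: "image_mset fst (two_coloured A M) = A + M"
  unfolding two_coloured_def by (simp add: multiset.map_comp comp_def)

lemma bij_betw_two_coloured:
  "bij_betw (case_prod two_coloured) ({A. \<forall>x\<in>#A. P x} \<times> {M. \<forall>x\<in>#M. Q x})
     {C. \<forall>p\<in>#C. snd p = 1 \<and> P (fst p) \<or> snd p = 2 \<and> Q (fst p)}"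
proof (rule bij_betw_byWitness[where f' = "\<lambda>C. (colour_class 1 C, colour_class 2 C)"])
  show "\<forall>AM\<in>{A. \<forall>x\<in>#A. P x} \<times> {M. \<forall>x\<in>#M. Q x}.
          (\<lambda>C. (colour_class 1 C, colour_class 2 C)) (case_prod two_coloured AM) = AM"
    using colour_class_two_coloured by auto
  show "\<forall>C\<in>{C. \<forall>p\<in>#C. snd p = 1 \<and> P (fst p) \<or> snd p = 2 \<and> Q (fst p)}.
          case_prod two_coloured (colour_class 1 C, colour_class 2 C) = C"
    using two_coloured_colour_class by fastforce
  show "(\<lambda>C. (colour_class 1 C, colour_class 2 C)) `
          {C. \<forall>p\<in>#C. snd p = 1 \<and> P (fst p) \<or> snd p = 2 \<and> Q (fst p)}
          \<subseteq> {A. \<forall>x\<in>#A. P x} \<times> {M. \<forall>x\<in>#M. Q x}"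
    unfolding colour_class_def by force
qed (auto simp: two_coloured_def)

lemma bij_betw_overpartitions_two_coloured:
  assumes "\<And>x. Q x \<Longrightarrow> 0 < x"
  shows "bij_betw (case_prod two_coloured \<circ> map_prod glaisher id)
           {(L, M) \<in> overpartitions n. \<forall>x\<in>#M. Q x}
           {P \<in> coloured_partitions n.
              \<forall>p\<in>#P. snd p = 1 \<and> odd (fst p) \<or> snd p = 2 \<and> Q (fst p)}"
proof -
  let ?Ovp = "{L. finite L \<and> 0 \<notin> L} \<times> {M. \<forall>x\<in>#M. Q x}"
  let ?Col = "{P. \<forall>p\<in>#P. snd p = 1 \<and> odd (fst p) \<or> snd p = 2 \<and> Q (fst p)}"
  let ?f = "case_prod two_coloured \<circ> map_prod glaisher id"
  have "bij_betw ?f ?Ovp ?Col"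
    using bij_betw_map_prod[OF bij_betw_glaisher bij_betw_id] bij_betw_two_coloured
    by (rule bij_betw_trans)
  then have "bij_betw ?f {LM \<in> ?Ovp. \<Sum>(fst LM) + sum_mset (snd LM) = n}
                         {P \<in> ?Col. sum_mset (image_mset fst P) = n}"
  proof (rule bij_betw_Collect)
    fix LM :: "nat set \<times> nat multiset"
    assume "LM \<in> ?Ovp"
    then show "sum_mset (image_mset fst (?f LM)) = n
                 \<longleftrightarrow> \<Sum>(fst LM) + sum_mset (snd LM) = n"
      by (cases LM) (simp add: image_mset_fst_two_coloured sum_mset_glaisher)
  qed
  moreover have "{(L, M) \<in> overpartitions n. \<forall>x\<in>#M. Q x}
                   = {LM \<in> ?Ovp. \<Sum>(fst LM) + sum_mset (snd LM) = n}"
  proof (rule set_eqI)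
    fix LM :: "nat set \<times> nat multiset"
    show "LM \<in> {(L, M) \<in> overpartitions n. \<forall>x\<in>#M. Q x}
            \<longleftrightarrow> LM \<in> {LM \<in> ?Ovp. \<Sum>(fst LM) + sum_mset (snd LM) = n}"
      using assms by (cases LM) (auto simp: overpartitions_def intro: gr0I)
  qed
  moreover have "{P \<in> coloured_partitions n.
                    \<forall>p\<in>#P. snd p = 1 \<and> odd (fst p) \<or> snd p = 2 \<and> Q (fst p)}
                   = {P \<in> ?Col. sum_mset (image_mset fst P) = n}"
    unfolding coloured_partitions_def using assms by (auto simp: odd_pos)
  ultimately show ?thesis
    by (simp only:)
qed

theorem proposition2p5:
  fixes r n :: nat
  assumes "even r" and "r \<ge> 2"
  shows "card {(L, M) \<in> overpartitions n. \<forall>x\<in>#M. odd x \<and> x > r}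
       = card {P \<in> coloured_partitions n.
                 \<forall>p\<in>#P. odd (fst p) \<and> (snd p = 1 \<or> (snd p = 2 \<and> fst p > r))}"
proof -
  have "bij_betw (case_prod two_coloured \<circ> map_prod glaisher id)
          {(L, M) \<in> overpartitions n. \<forall>x\<in>#M. odd x \<and> x > r}
          {P \<in> coloured_partitions n.
             \<forall>p\<in>#P. snd p = 1 \<and> odd (fst p) \<or> snd p = 2 \<and> odd (fst p) \<and> fst p > r}"
    by (rule bij_betw_overpartitions_two_coloured) (simp add: odd_pos)
  moreover have
    "{P \<in> coloured_partitions n. \<forall>p\<in>#P. odd (fst p) \<and> (snd p = 1 \<or> (snd p = 2 \<and> fst p > r))}
     = {P \<in> coloured_partitions n.
          \<forall>p\<in>#P. snd p = 1 \<and> odd (fst p) \<or> snd p = 2 \<and> odd (fst p) \<and> fst p > r}"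
    by blast
  ultimately show ?thesis
    by (simp only: bij_betw_same_card)
qed

end
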